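(* Let $N,K,d$ be positive integers, let $\bm{r},\bm{q}\in\mathbb{R}^d$, let $\mathcal{H}$ be a finite nonempty scenario set, and for each $k\in\{1,\dots,K\}$ and $h\in\mathcal{H}$ let $\bm{M^{k,h}}\in\mathbb{R}^{d\times d}$. Let $$\mathcal{X}=\Big\{\bm{x}\in\{0,1\}^{N\times K}:\ \textstyle\sum_{k=1}^K x_{n,k}=1,\ n=1,\dots,N\Big\},$$ and for $h\in\mathcal{H}$ and $\bm{x}\in\mathcal{X}$ let $f_h(\bm{x})=\bm{r}^\top\Big[\prod_{n=1}^N\Big(\sum_{k=1}^K \bm{M^{k,h}}x_{n,k}\Big)\Big]\bm{q}$. Let $\alpha\in(0,1]$, and let $\mathcal{H}^1,\dots,\mathcal{H}^P$ be a partition of $\mathcal{H}$ into $P$ subsets of equal cardinality with $\alpha|\mathcal{H}^p|\in\mathbb{Z}_+$ for all $p$ (so also $\alpha|\mathcal{H}|\in\mathbb{Z}_+$). Let $\hat z_{\mathcal{H}}=\max_{\bm{x}\in\mathcal{X}} s_\alpha\big([f_h(\bm{x})]_{h\in\mathcal{H}}\big)$, and for each $p$ let $\bm{x^{(p)}}\in\arg\max_{\bm{x}\in\mathcal{X}} s_\alpha\big([f_h(\bm{x})]_{h\in\mathcal{H}^p}\big)$. Then $$\max_{p=1,\dots,P} s_\alpha\big([f_h(\bm{x^{(p)}})]_{h\in\mathcal{H}}\big)\ \le\ \hat z_{\mathcal{H}}\ \le\ \frac1P\sum_{p=1}^P s_\alpha\big([f_h(\bm{x^{(p)}})]_{h\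in\mathcal{H}^p}\big).$$
   Context: For a finite index set $\mathcal{G}$, a vector $\bm{\upsilon}\in\mathbb{R}^{|\mathcal{G}|}$ and $\alpha\in(0,1]$ with $\alpha|\mathcal{G}|\in\mathbb{Z}_+$, $s_\alpha(\bm{\upsilon})$ denotes the average of the $\alpha|\mathcal{G}|$ smallest entries of $\bm{\upsilon}$ (a conditional-value-at-risk type quantity). In the paper $\hat z_{\mathcal{H}}$ is defined as the optimal value of a mixed-integer linear program that is an exact reformulation of the maximization problem written above. *)

theory Defs
  imports "HOL-Analysis.Analysis" "HOL-Library.Multiset"
begin

definition assignments :: "nat \<Rightarrow> nat \<Rightarrow> (nat \<Rightarrow> nat \<Rightarrow> real) set" where
  "assignments N K = {x. (\<forall>n<N. \<forall>k<K. x n k \<in> {0,1})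
                        \<and> (\<forall>n<N. (\<Sum>k<K. x n k) = 1)
                        \<and> (\<forall>n k. (n \<ge> N \<or> k \<ge> K) \<longrightarrow> x n k = 0)}"

definition mat_prod_list :: "nat \<Rightarrow> (nat \<Rightarrow> real^'d^'d) \<Rightarrow> real^'d^'d" where
  "mat_prod_list N A = foldl (\<lambda>P n. P ** A n) (mat 1) [0..<N]"

definition f_val :: "nat \<Rightarrow> nat \<Rightarrow> (nat \<Rightarrow> 'h \<Rightarrow> real^'d^'d) \<Rightarrow> real^'d \<Rightarrow> real^'d
                     \<Rightarrow> 'h \<Rightarrow> (nat \<Rightarrow> nat \<Rightarrow> real) \<Rightarrow> real" where
  "f_val N K M r q h x = r \<bullet> (mat_prod_list N (\<lambda>n. \<Sum>k<K. x n k *\<^sub>R M k h) *v q)"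

definition s_alpha :: "real \<Rightarrow> 'h set \<Rightarrow> ('h \<Rightarrow> real) \<Rightarrow> real" where
  "s_alpha \<alpha> G v = (let m = nat \<lfloor>\<alpha> * real (card G)\<rfloor> in
     sum_list (take m (sorted_list_of_multiset (image_mset v (mset_set G)))) / real m)"

end

theory Submission imports Defs begin

(* If every block Hp p has c elements and alpha c = m is an integer, then s_alpha over H
   is the mean of the P m smallest values. The m smallest values of each block together
   are P m values from H, so their sum bounds the sum of the P m smallest values of H from
   above: for every fixed assignment, s_alpha over H is at most the average of the blockwise
   s_alpha. Bounding each blockwise value by its optimum over assignments gives the upper
   bound; the lower bound holds because every x^(p) is a feasible assignment. *)

definition sum_smallest :: "'a set \<Rightarrow> ('a \<Rightarrow> real) \<Rightarrow> nat \<Rightarrow> real" where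
  "sum_smallest G v m = sum_list (take m (sorted_list_of_multiset (image_mset v (mset_set G))))"

lemma sum_le_sum_if_card_eq_and_below:
  fixes v :: "'a \<Rightarrow> 'b::linordered_semidom"
  assumes "finite S" "finite T" "card T = card S"
    and below: "\<And>y z. y \<in> T - S \<Longrightarrow> z \<in> S - T \<Longrightarrow> v y \<le> v z"
  shows "sum v T \<le> sum v S"
proof (cases "T - S = {}")
  case True
  then have "T = S" using assms(1,3) card_subset_eq by blast
  then show ?thesis by simp
next
  case False
  define t where "t = Max (v ` (T - S))"
  have "\<forall>y\<in>T - S. v y \<le> t" using assms(2) unfolding t_def by simp
  moreover have "\<forall>z\<in>S - T. t \<le> v z"
    using False assms(2) below unfolding t_def by simp
  moreover have "card (T - S) = card (S - T)"
    using assms(1-3) by (simp add: card_Diff_subset_Int Int_commute)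
  ultimately have "sum v (T - S) \<le> sum v (S - T)"
    using sum_bounded_above[of "T - S" v t] sum_bounded_below[of "S - T" t v] by simp
  moreover have "sum v T = sum v (T \<inter> S) + sum v (T - S)" "sum v S = sum v (S \<inter> T) + sum v (S - T)"
    using assms(1,2) by (simp_all add: sum.Int_Diff)
  ultimately show ?thesis by (simp add: Int_commute)
qed

lemma sorted_list_of_multiset_image_mset_set:
  assumes "finite G"
  obtains xs where "distinct xs" "set xs = G"
    "sorted_list_of_multiset (image_mset v (mset_set G)) = map v xs"
proof -
  obtain ys where ys: "distinct ys" "set ys = G" using finite_distinct_list[OF assms] by blast
  define xs where "xs = sort_key v ys"
  have image: "image_mset v (mset_set G) = mset (map v xs)"
    unfolding xs_def using ys by (metis mset_set_set mset_map mset_sort)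
  have "sorted (map v xs)" by (simp add: xs_def)
  then have "sorted_list_of_multiset (image_mset v (mset_set G)) = map v xs"
    unfolding image sorted_list_of_multiset_mset by (rule sorted_sort_id)
  moreover have "distinct xs" "set xs = G" unfolding xs_def using ys by simp_all
  ultimately show thesis using that by blast
qed

lemma sum_smallest_eq_sum_take:
  assumes "distinct xs" "sorted_list_of_multiset (image_mset v (mset_set G)) = map v xs"
  shows "sum_smallest G v m = sum v (set (take m xs))"
  using assms by (simp add: sum_smallest_def take_map sum_list_distinct_conv_sum_set)

lemma sum_smallest_attained:
  assumes "finite G" "m \<le> card G"
  obtains S where "S \<subseteq> G" "card S = m" "sum v S = sum_smallest G v m"
proof -
  obtain xs where xs: "distinct xs" "set xs = G"
    "sorted_list_of_multiset (image_mset v (mset_set G)) = map v xs"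
    using sorted_list_of_multiset_image_mset_set[OF assms(1)] by blast
  have "length xs = card G" using xs(1,2) by (metis distinct_card)
  then have "card (set (take m xs)) = m" using xs(1) assms(2) by (simp add: distinct_card)
  moreover have "set (take m xs) \<subseteq> G" using xs(2) by (meson set_take_subset)
  ultimately show ?thesis using that sum_smallest_eq_sum_take[OF xs(1,3)] by metis
qed

lemma sum_smallest_le:
  assumes "finite G" "S \<subseteq> G" "card S = m"
  shows "sum_smallest G v m \<le> sum v S"
proof -
  obtain xs where xs: "distinct xs" "set xs = G"
    "sorted_list_of_multiset (image_mset v (mset_set G)) = map v xs"
    using sorted_list_of_multiset_image_mset_set[OF assms(1)] by blast
  have sorted: "sorted (map v xs)" using xs(3) by (metis sorted_sorted_list_of_multiset)
  have m_le: "m \<le> length xs"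
    using assms xs(1,2) by (metis card_mono distinct_card)
  define T where "T = set (take m xs)"
  have "sum v T \<le> sum v S"
  proof (rule sum_le_sum_if_card_eq_and_below)
    show "finite S" "finite T" using assms(1,2) finite_subset T_def by auto
    show "card T = card S" using xs(1) m_le assms(3) by (simp add: T_def distinct_card)
    fix y z assume y: "y \<in> T - S" and z: "z \<in> S - T"
    obtain i where i: "i < m" "y = xs ! i" using y m_le by (auto simp: T_def in_set_conv_nth)
    have "z \<in> set xs" using z assms(2) xs(2) by auto
    then obtain j where j: "j < length xs" "z = xs ! j" by (auto simp: in_set_conv_nth)
    have "\<not> j < m" using z j by (auto simp: T_def in_set_conv_nth)
    then have "map v xs ! i \<le> map v xs ! j" using i j by (intro sorted_nth_mono[OF sorted]) auto
    then show "v y \<le> v z" using i j m_le by simp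
  qed
  then show ?thesis unfolding T_def using sum_smallest_eq_sum_take[OF xs(1,3)] by simp
qed

lemma sum_smallest_UN_le:
  assumes "finite I" "\<And>i. i \<in> I \<Longrightarrow> finite (G i)" "disjoint_family_on G I"
    and "\<And>i. i \<in> I \<Longrightarrow> m i \<le> card (G i)"
  shows "sum_smallest (\<Union>i\<in>I. G i) v (\<Sum>i\<in>I. m i) \<le> (\<Sum>i\<in>I. sum_smallest (G i) v (m i))"
proof -
  have "\<forall>i\<in>I. \<exists>S. S \<subseteq> G i \<and> card S = m i \<and> sum v S = sum_smallest (G i) v (m i)"
    using sum_smallest_attained assms(2,4) by metis
  then obtain S where S: "\<And>i. i \<in> I \<Longrightarrow>
      S i \<subseteq> G i \<and> card (S i) = m i \<and> sum v (S i) = sum_smallest (G i) v (m i)"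
    by metis
  have fin: "\<And>i. i \<in> I \<Longrightarrow> finite (S i)" using S assms(2) finite_subset by metis
  have disj: "\<forall>i\<in>I. \<forall>j\<in>I. i \<noteq> j \<longrightarrow> S i \<inter> S j = {}"
    using assms(3) S unfolding disjoint_family_on_def by blast
  have "sum_smallest (\<Union>i\<in>I. G i) v (\<Sum>i\<in>I. m i) \<le> sum v (\<Union>i\<in>I. S i)"
  proof (rule sum_smallest_le)
    show "finite (\<Union>i\<in>I. G i)" using assms(1,2) by blast
    show "(\<Union>i\<in>I. S i) \<subseteq> (\<Union>i\<in>I. G i)" using S by blast
    show "card (\<Union>i\<in>I. S i) = (\<Sum>i\<in>I. m i)"
      using assms(1) fin disj S by (simp add: card_UN_disjoint)
  qed
  also have "\<dots> = (\<Sum>i\<in>I. sum_smallest (G i) v (m i))"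
    using assms(1) fin disj S by (simp add: sum.UNION_disjoint)
  finally show ?thesis .
qed

lemma s_alpha_eq_sum_smallest:
  assumes "\<alpha> * real (card G) = real m"
  shows "s_alpha \<alpha> G v = sum_smallest G v m / real m"
  using assms by (simp add: s_alpha_def sum_smallest_def)

lemma s_alpha_UN_le_average:
  assumes "P > 0" "\<And>p. p < P \<Longrightarrow> finite (G p)" "disjoint_family_on G {..<P}"
    and "\<And>p. p < P \<Longrightarrow> card (G p) = c" "\<alpha> * real c \<in> \<int>" "0 \<le> \<alpha>" "\<alpha> \<le> 1"
  shows "s_alpha \<alpha> (\<Union>p<P. G p) v \<le> (1 / real P) * (\<Sum>p<P. s_alpha \<alpha> (G p) v)"
proof -
  have "\<alpha> * real c \<in> \<nat>" using assms(5,6) by (simp add: Nats_altdef2)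
  then obtain m where m: "\<alpha> * real c = real m" by (auto elim: Nats_cases)
  have "m \<le> c" using m assms(6,7) mult_left_le_one_le[of "real c" \<alpha>] by simp
  have "card (\<Union>p<P. G p) = P * c"
    using assms(2-4) by (simp add: card_UN_disjoint disjoint_family_on_def)
  then have "\<alpha> * real (card (\<Union>p<P. G p)) = real (\<Sum>p<P. m)"
    using m by (simp add: algebra_simps)
  then have "s_alpha \<alpha> (\<Union>p<P. G p) v
      = sum_smallest (\<Union>p<P. G p) v (\<Sum>p<P. m) / real (\<Sum>p<P. m)"
    by (rule s_alpha_eq_sum_smallest)
  also have "\<dots> \<le> (\<Sum>p<P. sum_smallest (G p) v m) / real (\<Sum>p<P. m)"
    using assms(2-4) \<open>m \<le> c\<close> by (intro divide_right_mono sum_smallest_UN_le) auto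
  also have "\<dots> = (1 / real P) * (\<Sum>p<P. sum_smallest (G p) v m / real m)"
    by (simp add: sum_divide_distrib mult.commute)
  also have "\<dots> = (1 / real P) * (\<Sum>p<P. s_alpha \<alpha> (G p) v)"
    using assms(4) m by (simp add: s_alpha_eq_sum_smallest)
  finally show ?thesis .
qed

lemma finite_assignments: "finite (assignments N K)"
proof -
  let ?rows = "{y. \<forall>k. (k \<in> {..<K} \<longrightarrow> y k \<in> {0, 1::real}) \<and> (k \<notin> {..<K} \<longrightarrow> y k = 0)}"
  have "finite {x. \<forall>n. (n \<in> {..<N} \<longrightarrow> x n \<in> ?rows) \<and> (n \<notin> {..<N} \<longrightarrow> x n = (\<lambda>_. 0))}"
    by (intro finite_set_of_finite_funs) auto
  moreover have "assignments N K \<subseteq> {x. \<forall>n. (n \<in> {..<N} \<longrightarrow> x n \<in> ?rows) \<and> (n \<notin> {..<N} \<longrightarrow> x n = (\<lambda>_. 0))}"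
    unfolding assignments_def by auto
  ultimately show ?thesis by (rule finite_subset[rotated])
qed

lemma assignments_nonempty:
  assumes "K > 0"
  shows "assignments N K \<noteq> {}"
proof -
  have "(\<lambda>n k. if n < N \<and> k = 0 then 1 else 0) \<in> assignments N K"
    using assms by (auto simp: assignments_def)
  then show ?thesis by blast
qed

theorem proposition2:
  fixes N K P :: nat
    and r q :: "real^'d"
    and H :: "'h set"
    and M :: "nat \<Rightarrow> 'h \<Rightarrow> real^'d^'d"
    and \<alpha> :: real
    and Hp :: "nat \<Rightarrow> 'h set"
    and xp :: "nat \<Rightarrow> (nat \<Rightarrow> nat \<Rightarrow> real)"
  assumes "N > 0" and "K > 0"
    and "finite H" and "H \<noteq> {}"
    and "0 < \<alpha>" and "\<alpha> \<le> 1"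
    and "P > 0"
    and "(\<Union>p<P. Hp p) = H"
    and "\<forall>p<P. \<forall>p'<P. p \<noteq> p' \<longrightarrow> Hp p \<inter> Hp p' = {}"
    and "\<forall>p<P. \<forall>p'<P. card (Hp p) = card (Hp p')"
    and "\<forall>p<P. \<alpha> * real (card (Hp p)) \<in> \<int>"
    and "\<forall>p<P. xp p \<in> assignments N K \<and>
           (\<forall>x\<in>assignments N K.
              s_alpha \<alpha> (Hp p) (\<lambda>h. f_val N K M r q h x)
              \<le> s_alpha \<alpha> (Hp p) (\<lambda>h. f_val N K M r q h (xp p)))"
  shows "(MAX p\<in>{..<P}. s_alpha \<alpha> H (\<lambda>h. f_val N K M r q h (xp p)))
           \<le> (MAX x\<in>assignments N K. s_alpha \<alpha> H (\<lambda>h. f_val N K M r q h x))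
       \<and> (MAX x\<in>assignments N K. s_alpha \<alpha> H (\<lambda>h. f_val N K M r q h x))
           \<le> (1 / real P) * (\<Sum>p<P. s_alpha \<alpha> (Hp p) (\<lambda>h. f_val N K M r q h (xp p)))"
proof -
  define c where "c = card (Hp 0)"
  have card_Hp: "\<And>p. p < P \<Longrightarrow> card (Hp p) = c" using assms(7,10) unfolding c_def by blast
  have "Hp p \<subseteq> H" if "p < P" for p using assms(8) that by blast
  then have finite_Hp: "finite (Hp p)" if "p < P" for p using assms(3) that finite_subset by blast
  have disjoint_Hp: "disjoint_family_on Hp {..<P}"
    using assms(9) unfolding disjoint_family_on_def by blast
  have integral: "\<alpha> * real c \<in> \<int>" using assms(7,11) unfolding c_def by blast
  have partition_bound: "s_alpha \<alpha> H v \<le> (1 / real P) * (\<Sum>p<P. s_alpha \<alpha> (Hp p) v)" for v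
    unfolding assms(8)[symmetric] using s_alpha_UN_le_average[OF assms(7) finite_Hp disjoint_Hp card_Hp
        integral less_imp_le[OF assms(5)] assms(6)] .
  have "s_alpha \<alpha> H (\<lambda>h. f_val N K M r q h (xp p))
        \<le> (MAX x\<in>assignments N K. s_alpha \<alpha> H (\<lambda>h. f_val N K M r q h x))" if "p < P" for p
    using assms(12) that finite_assignments by (intro Max_ge) auto
  moreover have "s_alpha \<alpha> H (\<lambda>h. f_val N K M r q h x)
        \<le> (1 / real P) * (\<Sum>p<P. s_alpha \<alpha> (Hp p) (\<lambda>h. f_val N K M r q h (xp p)))"
    if "x \<in> assignments N K" for x
  proof -
    have "s_alpha \<alpha> H (\<lambda>h. f_val N K M r q h x)
        \<le> (1 / real P) * (\<Sum>p<P. s_alpha \<alpha> (Hp p) (\<lambda>h. f_val N K M r q h x))"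
      by (rule partition_bound)
    also have "\<dots> \<le> (1 / real P) * (\<Sum>p<P. s_alpha \<alpha> (Hp p) (\<lambda>h. f_val N K M r q h (xp p)))"
      using assms(12) that by (intro mult_left_mono sum_mono) auto
    finally show ?thesis .
  qed
  ultimately show ?thesis
    using assms(7) finite_assignments assignments_nonempty[OF assms(2)]
    by (intro conjI Max.boundedI) auto
qed

end
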